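(* Let $\lambda$ be a strict partition, $\mu$ a toggle-symmetric distribution on $J(P^{\mathrm{shift}}_\lambda)$, and $[i,j]\in P^{\mathrm{shift}}_\lambda$. Then \[\mathbb{E}(\mu;R^{\mathrm{shift}}_{ij})=\sum_{[i',j]\in P^{\mathrm{shift}}_\lambda}\mathbb{E}(\mu;\mathcal{T}^-_{[i',j]})+\sum_{[i,j']\in P^{\mathrm{shift}}_\lambda}\mathbb{E}(\mu;\mathcal{T}^-_{[i,j']})+\sum_{\substack{i'<i\\ [i',i']\in P^{\mathrm{shift}}_\lambda}}\mathbb{E}(\mu;\mathcal{T}^-_{[i',i']})+\sum_{\substack{j'>j\\ [j',j']\in P^{\mathrm{shift}}_\lambda}}\mathbb{E}(\mu;\mathcal{T}^-_{[j',j']}).\]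
   Context: A strict partition has $\lambda_i>\lambda_{i+1}$ whenever $\lambda_i\ne0$. $P^{\mathrm{shift}}_\lambda$ is the set of boxes $[i,j]$ with $1\le i\le\ell(\lambda)$, $i\le j\le i+\lambda_i-1$, ordered by $[i,j]\le[i',j']$ iff $i\le i'$ and $j\le j'$; $J(\cdot)$ is the lattice of order ideals. For a box $p$ and order ideal $I$: $\mathcal{T}^+_p(I)=1$ iff $p\notin I$ and $p$ is minimal in $P^{\mathrm{shift}}_\lambda\setminus I$; $\mathcal{T}^-_p(I)=1$ iff $p\in I$ and $p$ is maximal in $I$ (else $0$). $\mu$ is toggle-symmetric if $\mathbb{E}(\mu;\mathcal{T}^+_p)=\mathbb{E}(\mu;\mathcal{T}^-_p)$ for all $p$. The shifted rook at $[i,j]$ is \[R^{\mathrm{shift}}_{ij}:=\sum_{\substack{i'\le i,\ j'\le j}}\mathcal{T}^+_{[i',j']}+\sum_{\substack{i'\ge i,\ j'\ge j}}\mathcal{T}^-_{[i',j']}-\sum_{\substack{i'<i,\ j'<j,\ i'<j'}}\mathcal{T}^-_{[i',j']}-\sum_{\substack{i'>i,\ j'>j,\ i'<j'}}\mathcal{T}^+_{[i',j']},\] all sums over boxes $[i',j']\in P^{\mathrm{shift}}_\lambda$. *)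

theory Defs
  imports Complex_Main
begin

type_synonym box = "nat \<times> nat"

definition strict_partition :: "nat list \<Rightarrow> bool" where
  "strict_partition lam \<longleftrightarrow> sorted_wrt (>) lam \<and> (\<forall>x \<in> set lam. 0 < x)"

definition shifted_diagram :: "nat list \<Rightarrow> box set" where
  "shifted_diagram lam = {(i, j). 1 \<le> i \<and> i \<le> length lam \<and> i \<le> j \<and> j + 1 \<le> i + lam ! (i - 1)}"

definition box_le :: "box \<Rightarrow> box \<Rightarrow> bool" where
  "box_le p q \<longleftrightarrow> fst p \<le> fst q \<and> snd p \<le> snd q"

definition order_ideals :: "box set \<Rightarrow> box set set" where
  "order_ideals P = {I. I \<subseteq> P \<and> (\<forall>p \<in> I. \<forall>q \<in> P. box_le q p \<longrightarrow> q \<in> I)}"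

definition Tplus :: "box set \<Rightarrow> box \<Rightarrow> box set \<Rightarrow> real" where
  "Tplus P p I = (if p \<in> P \<and> p \<notin> I \<and> (\<forall>q \<in> P - I. box_le q p \<longrightarrow> q = p) then 1 else 0)"

definition Tminus :: "box set \<Rightarrow> box \<Rightarrow> box set \<Rightarrow> real" where
  "Tminus P p I = (if p \<in> I \<and> (\<forall>q \<in> I. box_le p q \<longrightarrow> q = p) then 1 else 0)"

definition is_distribution :: "box set set \<Rightarrow> (box set \<Rightarrow> real) \<Rightarrow> bool" where
  "is_distribution S mu \<longleftrightarrow> (\<forall>I \<in> S. 0 \<le> mu I) \<and> (\<Sum>I \<in> S. mu I) = 1"

definition expect :: "box set set \<Rightarrow> (box set \<Rightarrow> real) \<Rightarrow> (box set \<Rightarrow> real) \<Rightarrow> real" where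
  "expect S mu f = (\<Sum>I \<in> S. mu I * f I)"

definition toggle_symmetric :: "box set \<Rightarrow> (box set \<Rightarrow> real) \<Rightarrow> bool" where
  "toggle_symmetric P mu \<longleftrightarrow>
     (\<forall>p \<in> P. expect (order_ideals P) mu (Tplus P p) = expect (order_ideals P) mu (Tminus P p))"

definition shifted_rook :: "nat list \<Rightarrow> nat \<Rightarrow> nat \<Rightarrow> box set \<Rightarrow> real" where
  "shifted_rook lam i j I = (let P = shifted_diagram lam in
      (\<Sum>p \<in> {p \<in> P. fst p \<le> i \<and> snd p \<le> j}. Tplus P p I)
    + (\<Sum>p \<in> {p \<in> P. fst p \<ge> i \<and> snd p \<ge> j}. Tminus P p I)
    - (\<Sum>p \<in> {p \<in> P. fst p < i \<and> snd p < j \<and> fst p < snd p}. Tminus P p I)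
    - (\<Sum>p \<in> {p \<in> P. fst p > i \<and> snd p > j \<and> fst p < snd p}. Tplus P p I))"

end

theory Submission
  imports Defs
begin

text \<open>By toggle-symmetry every T+ term of the rook may be replaced by the corresponding
  T- term, so the expectation becomes a signed sum of the numbers e p = E(mu; T-_p) over four
  regions of the diagram. Since every box [a,b] has a \<le> b, and i \<le> j, box by box the two
  closed quadrants minus the two strict off-diagonal quadrants leave exactly column j, row i,
  and the diagonal boxes before i and after j.\<close>

lemma expect_sum:
  "expect S mu (\<lambda>I. \<Sum>p\<in>A. f p I) = (\<Sum>p\<in>A. expect S mu (f p))"
  unfolding expect_def by (simp add: sum_distrib_left sum.swap[of _ S])

lemma expect_add_diff:
  "expect S mu (\<lambda>I. a I + b I - c I - d I) =
   expect S mu a + expect S mu b - expect S mu c - expect S mu d"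
  unfolding expect_def by (simp add: algebra_simps sum.distrib sum_subtractf)

lemma finite_shifted_diagram: "finite (shifted_diagram lam)"
proof (rule finite_subset)
  show "shifted_diagram lam \<subseteq> (SIGMA i:{1..length lam}. {i..< i + lam ! (i - 1)})"
    unfolding shifted_diagram_def by auto
qed auto

lemma shifted_diagram_fst_le_snd: "p \<in> shifted_diagram lam \<Longrightarrow> fst p \<le> snd p"
  unfolding shifted_diagram_def by auto

lemma expect_shifted_rook_eq_Tminus_sums:
  assumes "toggle_symmetric (shifted_diagram lam) mu"
  defines "P \<equiv> shifted_diagram lam"
  shows "expect (order_ideals P) mu (shifted_rook lam i j) =
       (\<Sum>p\<in>{p \<in> P. fst p \<le> i \<and> snd p \<le> j}. expect (order_ideals P) mu (Tminus P p))
     + (\<Sum>p\<in>{p \<in> P. fst p \<ge> i \<and> snd p \<ge> j}. expect (order_ideals P) mu (Tminus P p))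
     - (\<Sum>p\<in>{p \<in> P. fst p < i \<and> snd p < j \<and> fst p < snd p}. expect (order_ideals P) mu (Tminus P p))
     - (\<Sum>p\<in>{p \<in> P. fst p > i \<and> snd p > j \<and> fst p < snd p}. expect (order_ideals P) mu (Tminus P p))"
proof -
  have Tplus_Tminus: "(\<Sum>p\<in>{p \<in> P. Q p}. expect (order_ideals P) mu (Tplus P p)) =
      (\<Sum>p\<in>{p \<in> P. Q p}. expect (order_ideals P) mu (Tminus P p))" for Q
    using assms(1) unfolding toggle_symmetric_def P_def by (intro sum.cong) auto
  show ?thesis
    unfolding shifted_rook_def Let_def P_def[symmetric]
    by (simp only: expect_add_diff expect_sum Tplus_Tminus)
qed

lemma signed_quadrant_sums_eq:
  fixes e :: "box \<Rightarrow> real"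
  assumes "finite P" and "\<And>p. p \<in> P \<Longrightarrow> fst p \<le> snd p" and "i \<le> j"
  shows "(\<Sum>p\<in>{p \<in> P. fst p \<le> i \<and> snd p \<le> j}. e p)
     + (\<Sum>p\<in>{p \<in> P. fst p \<ge> i \<and> snd p \<ge> j}. e p)
     - (\<Sum>p\<in>{p \<in> P. fst p < i \<and> snd p < j \<and> fst p < snd p}. e p)
     - (\<Sum>p\<in>{p \<in> P. fst p > i \<and> snd p > j \<and> fst p < snd p}. e p)
   = (\<Sum>p\<in>{p \<in> P. snd p = j}. e p) + (\<Sum>p\<in>{p \<in> P. fst p = i}. e p)
     + (\<Sum>p\<in>{p \<in> P. fst p = snd p \<and> fst p < i}. e p)
     + (\<Sum>p\<in>{p \<in> P. fst p = snd p \<and> fst p > j}. e p)"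
proof -
  have box_identity:
    "(if fst p \<le> i \<and> snd p \<le> j then e p else 0)
     + (if fst p \<ge> i \<and> snd p \<ge> j then e p else 0)
     - (if fst p < i \<and> snd p < j \<and> fst p < snd p then e p else 0)
     - (if fst p > i \<and> snd p > j \<and> fst p < snd p then e p else 0)
   = (if snd p = j then e p else 0) + (if fst p = i then e p else 0)
     + (if fst p = snd p \<and> fst p < i then e p else 0)
     + (if fst p = snd p \<and> fst p > j then e p else 0)" if "p \<in> P" for p
    using assms(2)[OF that] assms(3) by (cases p) auto
  show ?thesis
    using sum.cong[OF refl box_identity, of P]
    by (simp only: assms(1) sum.inter_filter sum.distrib sum_subtractf)
qed

theorem lemma5p3:
  fixes lam :: "nat list" and mu :: "box set \<Rightarrow> real" and i j :: nat
  assumes "strict_partition lam"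
    and "is_distribution (order_ideals (shifted_diagram lam)) mu"
    and "toggle_symmetric (shifted_diagram lam) mu"
    and "(i, j) \<in> shifted_diagram lam"
  shows "expect (order_ideals (shifted_diagram lam)) mu (shifted_rook lam i j) =
      (\<Sum>p \<in> {p \<in> shifted_diagram lam. snd p = j}.
          expect (order_ideals (shifted_diagram lam)) mu (Tminus (shifted_diagram lam) p))
    + (\<Sum>p \<in> {p \<in> shifted_diagram lam. fst p = i}.
          expect (order_ideals (shifted_diagram lam)) mu (Tminus (shifted_diagram lam) p))
    + (\<Sum>p \<in> {p \<in> shifted_diagram lam. fst p = snd p \<and> fst p < i}.
          expect (order_ideals (shifted_diagram lam)) mu (Tminus (shifted_diagram lam) p))
    + (\<Sum>p \<in> {p \<in> shifted_diagram lam. fst p = snd p \<and> fst p > j}.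
          expect (order_ideals (shifted_diagram lam)) mu (Tminus (shifted_diagram lam) p))"
proof -
  have "i \<le> j"
    using shifted_diagram_fst_le_snd[OF assms(4)] by simp
  then show ?thesis
    unfolding expect_shifted_rook_eq_Tminus_sums[OF assms(3)]
    by (intro signed_quadrant_sums_eq finite_shifted_diagram shifted_diagram_fst_le_snd)
qed

end
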